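(* Let $m\ge2$, $n=3^{2m}-1$, and for $0\le j\le 2m-1$ let $S_{1j}=\{-3^i(3^j(3^m+1)+1)\bmod n : 0\le i\le 2m-1\}\subseteq\mathbb Z/n\mathbb Z$, and $S_1=\bigcup_{j=0}^{2m-1}S_{1j}$. Then: (1) $|S_{1j}|=2m$ for every $0\le j\le 2m-1$; (2) for $0\le j_1\ne j_2\le 2m-1$, either $S_{1j_1}\cap S_{1j_2}=\varnothing$ or $S_{1j_1}=S_{1j_2}$, and the latter holds if and only if $j_1\equiv j_2+m\pmod{2m}$; (3) $|S_1|=2m^2$. *)

theory Defs
  imports Main
begin

text \<open>Residues of Z/nZ are represented by their canonical representatives in {0..<n}
  (integers), with n = 3^(2m) - 1.\<close>

definition modulus :: "nat \<Rightarrow> int" where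
  "modulus m = 3 ^ (2*m) - 1"

definition S1j :: "nat \<Rightarrow> nat \<Rightarrow> int set" where
  "S1j m j = {(- (3 ^ i * (3 ^ j * (3 ^ m + 1) + 1))) mod modulus m | i. i \<le> 2*m - 1}"

definition S1 :: "nat \<Rightarrow> int set" where
  "S1 m = (\<Union>j\<in>{0..2*m-1}. S1j m j)"

end

theory Submission
  imports Defs "HOL-Number_Theory.Cong"
begin

text \<open>
  Modulo \<open>n = 3^(2m) - 1\<close> we have \<open>3^(2m) \<equiv> 1\<close>, so
  \<open>3^i (3^j (3^m + 1) + 1) \<equiv> 3^a + 3^b + 3^c\<close> with exponents \<open>a = i\<close>, \<open>b = i + j\<close>,
  \<open>c = i + j + m\<close> taken mod \<open>2m\<close>. As \<open>b \<noteq> c\<close>, the right-hand side is a base-3 expansion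
  with digits at most 2 of a number below \<open>n\<close>, so the residue determines the multiset
  \<open>{a, b, c}\<close>. In that multiset \<open>a\<close> is the only position occurring more often than its
  antipode (the position shifted by \<open>m\<close>), and the remaining antipodal pair \<open>{b, c}\<close>
  determines \<open>j\<close> up to adding \<open>m\<close>. Since negation is a bijection of \<open>\<int>/n\<int>\<close>, each \<open>S\<^sub>1\<^sub>j\<close>
  has \<open>2m\<close> elements, \<open>S\<^sub>1\<^sub>j\<close> and \<open>S\<^sub>1\<^sub>j\<^sub>'\<close> coincide exactly for antipodal \<open>j, j'\<close> and are
  disjoint otherwise, and \<open>S\<^sub>1\<close> is the disjoint union of \<open>m\<close> of them.
\<close>

lemma base_expansion_unique:
  fixes d e :: "nat \<Rightarrow> nat" and b :: nat
  assumes "\<forall>k<N. d k < b" "\<forall>k<N. e k < b" "(\<Sum>k<N. d k * b^k) = (\<Sum>k<N. e k * b^k)"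
  shows "\<forall>k<N. d k = e k"
  using assms
proof (induction N arbitrary: d e)
  case 0
  then show ?case by simp
next
  case (Suc N)
  have split: "(\<Sum>k<Suc N. f k * b^k) = f 0 + b * (\<Sum>k<N. f (Suc k) * b^k)" for f
    unfolding sum.lessThan_Suc_shift by (simp add: sum_distrib_left algebra_simps)
  have eq: "d 0 + b * (\<Sum>k<N. d (Suc k) * b^k) = e 0 + b * (\<Sum>k<N. e (Suc k) * b^k)"
    using Suc.prems(3) by (simp only: split)
  have "d 0 < b" "e 0 < b" using Suc.prems(1,2) by auto
  moreover from eq have "(d 0 + b * (\<Sum>k<N. d (Suc k) * b^k)) mod b
               = (e 0 + b * (\<Sum>k<N. e (Suc k) * b^k)) mod b"
    by (rule arg_cong)
  ultimately have lowest: "d 0 = e 0" by simp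
  with eq \<open>d 0 < b\<close> have "(\<Sum>k<N. d (Suc k) * b^k) = (\<Sum>k<N. e (Suc k) * b^k)"
    by simp
  then have higher: "\<forall>k<N. d (Suc k) = e (Suc k)"
    using Suc.prems(1,2) by (intro Suc.IH) auto
  show ?case
  proof (intro allI impI)
    fix k assume "k < Suc N"
    then show "d k = e k" using lowest higher by (cases k) auto
  qed
qed

lemma cong_pow_mod_period:
  fixes a n :: "'a :: unique_euclidean_semiring"
  assumes "[a ^ N = 1] (mod n)"
  shows "[a ^ k = a ^ (k mod N)] (mod n)"
proof -
  have "a ^ k = (a ^ N) ^ (k div N) * a ^ (k mod N)"
    by (simp only: power_mult [symmetric] power_add [symmetric] mult_div_mod_eq)
  also have "[\<dots> = 1 ^ (k div N) * a ^ (k mod N)] (mod n)"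
    by (intro cong_mult cong_pow assms cong_refl)
  finally show ?thesis by simp
qed

lemma inj_on_uminus_mod:
  fixes n :: int
  shows "inj_on (\<lambda>a. (- a) mod n) {0..<n}"
proof (rule inj_onI)
  fix a b assume ab: "a \<in> {0..<n}" "b \<in> {0..<n}" and "(- a) mod n = (- b) mod n"
  then have "n dvd (- a) - (- b)" by (simp only: mod_eq_dvd_iff)
  show "a = b"
  proof (rule ccontr)
    assume "a \<noteq> b"
    then have "\<bar>n\<bar> \<le> \<bar>(- a) - (- b)\<bar>" using \<open>n dvd _\<close> by (intro dvd_imp_le_int) simp_all
    with ab show False by (simp add: abs_if split: if_splits)
  qed
qed

definition antipode :: "nat \<Rightarrow> nat \<Rightarrow> nat" where
  "antipode m q = (q + m) mod (2*m)"

lemma antipode_mod [simp]: "antipode m (q mod (2*m)) = antipode m q"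
  unfolding antipode_def by (rule mod_add_left_eq)

lemma antipode_less: "m > 0 \<Longrightarrow> antipode m q < 2*m"
  unfolding antipode_def by simp

lemma antipode_antipode [simp]: "antipode m (antipode m q) = q mod (2*m)"
proof -
  have "antipode m (antipode m q) = (q + 2*m) mod (2*m)"
    unfolding antipode_def mod_add_left_eq by (simp only: add.assoc mult_2)
  then show ?thesis by simp
qed

lemma antipode_neq: "m > 0 \<Longrightarrow> antipode m q \<noteq> q mod (2*m)"
proof
  assume "m > 0" and "antipode m q = q mod (2*m)"
  then have "q mod (2*m) = (q + m) mod (2*m)" unfolding antipode_def by simp
  then have "2*m dvd (q + m) - q" by (subst mod_eq_dvd_iff_nat [symmetric]) simp_all
  with \<open>m > 0\<close> show False by (auto dest: dvd_imp_le)
qed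

lemma antipode_eq_iff:
  "p < 2*m \<Longrightarrow> x < 2*m \<Longrightarrow> antipode m p = x \<longleftrightarrow> p = antipode m x"
  by (metis antipode_antipode mod_less)

lemma antipode_add: "(i + antipode m j) mod (2*m) = antipode m (i + j)"
  unfolding antipode_def by (simp add: mod_add_right_eq add.assoc)

definition exponent_count :: "nat \<Rightarrow> nat \<Rightarrow> nat \<Rightarrow> nat \<Rightarrow> nat" where
  "exponent_count m i j k =
     of_bool (k = i mod (2*m)) + of_bool (k = (i + j) mod (2*m)) + of_bool (k = antipode m (i + j))"

definition exponent_value :: "nat \<Rightarrow> nat \<Rightarrow> nat \<Rightarrow> nat" where
  "exponent_value m i j = 3 ^ (i mod (2*m)) + 3 ^ ((i + j) mod (2*m)) + 3 ^ antipode m (i + j)"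

lemma exponent_count_less_3: "m > 0 \<Longrightarrow> exponent_count m i j k < 3"
  using antipode_neq[of m "i + j"] unfolding exponent_count_def by auto

lemma sum_indicator_power: "a < N \<Longrightarrow> (\<Sum>k<N. of_bool (k = a) * b ^ k) = (b ^ a :: nat)"
  by (simp add: if_distrib sum.delta)

lemma exponent_value_expansion:
  "m > 0 \<Longrightarrow> (\<Sum>k<2*m. exponent_count m i j k * 3 ^ k) = exponent_value m i j"
  unfolding exponent_count_def exponent_value_def
  by (simp add: distrib_right sum.distrib sum_indicator_power antipode_less)

lemma exponent_count_antipode:
  assumes "m > 0" "p < 2*m"
  shows "exponent_count m i j p + of_bool (p = antipode m i)
       = exponent_count m i j (antipode m p) + of_bool (p = i mod (2*m))"
proof -
  have "antipode m p = i mod (2*m) \<longleftrightarrow> p = antipode m i"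
    using antipode_eq_iff[OF assms(2), of "i mod (2*m)"] assms(1) by simp
  moreover have "antipode m p = (i + j) mod (2*m) \<longleftrightarrow> p = antipode m (i + j)"
    using antipode_eq_iff[OF assms(2), of "(i + j) mod (2*m)"] assms(1) by simp
  moreover have "antipode m p = antipode m (i + j) \<longleftrightarrow> p = (i + j) mod (2*m)"
    using antipode_eq_iff[OF assms(2) antipode_less[OF assms(1)]] by simp
  ultimately show ?thesis unfolding exponent_count_def by simp
qed

lemma exponent_count_eq_imp_base_eq:
  assumes "m > 0" "i1 < 2*m" "i2 < 2*m"
    and counts: "\<forall>k<2*m. exponent_count m i1 j1 k = exponent_count m i2 j2 k"
  shows "i1 = i2"
proof -
  let ?c = "exponent_count m i2 j2" and ?i1' = "antipode m i1"
  have "exponent_count m i1 j1 i1 = exponent_count m i1 j1 ?i1' + 1"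
    using exponent_count_antipode[OF assms(1,2), of i1 j1] antipode_neq[OF assms(1), of i1] assms(2)
    by simp
  then have "?c i1 = ?c ?i1' + 1"
    using counts assms(2) antipode_less[OF assms(1)] by simp
  moreover have "?c i1 + of_bool (i1 = antipode m i2) = ?c ?i1' + of_bool (i1 = i2)"
    using exponent_count_antipode[OF assms(1,2), of i2 j2] assms(3) by simp
  ultimately show ?thesis by (cases "i1 = i2") auto
qed

lemma exponent_count_eq_imp_shift_eq:
  assumes "m > 0"
    and counts: "\<forall>k<2*m. exponent_count m i j1 k = exponent_count m i j2 k"
  shows "j1 mod (2*m) = j2 mod (2*m) \<or> j1 mod (2*m) = antipode m j2"
proof -
  let ?k = "(i + j1) mod (2*m)"
  have "exponent_count m i j1 ?k = of_bool (?k = i mod (2*m)) + 1"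
    using antipode_neq[OF assms(1), of "i + j1"] unfolding exponent_count_def by auto
  moreover have "?k < 2*m" using assms(1) by simp
  ultimately have "exponent_count m i j2 ?k = of_bool (?k = i mod (2*m)) + 1"
    using counts by simp
  then have "?k = (i + j2) mod (2*m) \<or> ?k = antipode m (i + j2)"
    unfolding exponent_count_def by (auto simp: of_bool_def split: if_splits)
  then have "[i + j1 = i + j2] (mod 2*m) \<or> [i + j1 = i + (j2 + m)] (mod 2*m)"
    unfolding cong_def antipode_def by (simp add: add.assoc)
  then have "[j1 = j2] (mod 2*m) \<or> [j1 = j2 + m] (mod 2*m)" by (simp only: cong_add_lcancel_nat)
  then show ?thesis unfolding cong_def antipode_def .
qed

lemma exponent_value_eq_imp_base_eq_and_shift_eq:
  assumes "m > 0" "i1 < 2*m" "i2 < 2*m" "exponent_value m i1 j1 = exponent_value m i2 j2"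
  shows "i1 = i2 \<and> (j1 mod (2*m) = j2 mod (2*m) \<or> j1 mod (2*m) = antipode m j2)"
proof -
  have counts: "\<forall>k<2*m. exponent_count m i1 j1 k = exponent_count m i2 j2 k"
    by (rule base_expansion_unique[where b = 3])
      (use assms exponent_count_less_3 exponent_value_expansion in auto)
  then have "i1 = i2" using exponent_count_eq_imp_base_eq assms(1-3) by blast
  with counts show ?thesis using exponent_count_eq_imp_shift_eq[OF assms(1)] by blast
qed

lemma exponent_value_antipode: "exponent_value m i (antipode m j) = exponent_value m i j"
proof -
  have "antipode m (i + antipode m j) = (i + j) mod (2*m)"
    by (metis antipode_add antipode_antipode antipode_mod)
  then show ?thesis unfolding exponent_value_def antipode_add by simp
qed

lemma exponent_value_less:
  assumes "m > 0"
  shows "exponent_value m i j < 3 ^ (2*m) - 1"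
proof -
  let ?N = "2*m" and ?K = "3 ^ (2*m - 2) :: nat"
  let ?a = "i mod ?N" and ?b = "(i + j) mod ?N" and ?c = "antipode m (i + j)"
  have bound: "3 ^ x \<le> 3 * ?K" if "x < ?N" for x
  proof -
    have "(3::nat) ^ x \<le> 3 ^ Suc (?N - 2)" using that by (intro power_increasing) auto
    then show ?thesis by simp
  qed
  have pair: "3 ^ x + 3 ^ y \<le> 4 * ?K" if "x < ?N - 1" "y < ?N" for x y
  proof -
    have "(3::nat) ^ x \<le> ?K" using that(1) by (intro power_increasing) auto
    then show ?thesis using bound[OF that(2)] by linarith
  qed
  have "?b \<noteq> ?c" "?b < ?N" "?c < ?N" using antipode_neq[OF assms] antipode_less[OF assms] assms
    by (simp_all add: eq_commute)
  then have "?b < ?N - 1 \<or> ?c < ?N - 1" by linarith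
  then have "3 ^ ?b + 3 ^ ?c \<le> 4 * ?K"
    using pair[of ?b ?c] pair[of ?c ?b] \<open>?b < ?N\<close> \<open>?c < ?N\<close> by auto
  moreover have "3 ^ ?a \<le> 3 * ?K" using bound assms by simp
  moreover have "(3::nat) ^ ?N = 9 * ?K"
  proof -
    have "?N = 2 + (?N - 2)" using assms by simp
    then have "(3::nat) ^ ?N = 3 ^ 2 * ?K" by (metis power_add)
    then show ?thesis by simp
  qed
  moreover have "?K \<ge> 1" by simp
  ultimately show ?thesis unfolding exponent_value_def by linarith
qed

lemma three_pow_cong_mod_period: "[3 ^ k = 3 ^ (k mod (2*m))] (mod modulus m)"
  by (rule cong_pow_mod_period) (simp add: modulus_def cong_iff_dvd_diff)

lemma exponent_value_less_modulus: "m > 0 \<Longrightarrow> int (exponent_value m i j) < modulus m"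
proof -
  assume "m > 0"
  have "int (3 ^ (2*m) - 1) = 3 ^ (2*m) - 1" by (simp add: of_nat_diff)
  then show ?thesis
    using exponent_value_less[OF \<open>m > 0\<close>, of i j] unfolding modulus_def by linarith
qed

lemma S1j_element_mod_modulus:
  assumes "m > 0"
  shows "3 ^ i * (3 ^ j * (3 ^ m + 1) + 1) mod modulus m = int (exponent_value m i j)"
proof -
  have "3 ^ i * (3 ^ j * (3 ^ m + 1) + 1) = (3::int) ^ i + 3 ^ (i + j) + 3 ^ (i + j + m)"
    by (simp add: algebra_simps power_add)
  also have "[\<dots> = 3 ^ (i mod (2*m)) + 3 ^ ((i + j) mod (2*m)) + 3 ^ ((i + j + m) mod (2*m))]
               (mod modulus m)"
    by (intro cong_add three_pow_cong_mod_period)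
  also have "3 ^ (i mod (2*m)) + 3 ^ ((i + j) mod (2*m)) + 3 ^ ((i + j + m) mod (2*m))
             = int (exponent_value m i j)"
    unfolding exponent_value_def antipode_def by simp
  finally show ?thesis
    using exponent_value_less_modulus[OF assms] unfolding cong_def by simp
qed

lemma S1j_eq_image:
  assumes "m > 0"
  shows "S1j m j = (\<lambda>i. (- int (exponent_value m i j)) mod modulus m) ` {..<2*m}"
proof -
  have "(- (3 ^ i * (3 ^ j * (3 ^ m + 1) + 1))) mod modulus m
        = (- int (exponent_value m i j)) mod modulus m" for i
    by (metis S1j_element_mod_modulus[OF assms] mod_minus_eq)
  moreover have "{i. i \<le> 2*m - 1} = {..<2*m}" using assms by auto
  ultimately show ?thesis unfolding S1j_def by (auto simp: setcompr_eq_image)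
qed

lemma minus_exponent_value_mod_eq_imp_eq:
  assumes "m > 0"
    and "(- int (exponent_value m i1 j1)) mod modulus m
       = (- int (exponent_value m i2 j2)) mod modulus m"
  shows "exponent_value m i1 j1 = exponent_value m i2 j2"
  using inj_on_uminus_mod[of "modulus m"] exponent_value_less_modulus[OF assms(1)] assms(2)
  unfolding inj_on_def by fastforce

lemma card_S1j: "m > 0 \<Longrightarrow> card (S1j m j) = 2*m"
  unfolding S1j_eq_image
  by (subst card_image)
    (auto intro!: inj_onI
          dest: minus_exponent_value_mod_eq_imp_eq exponent_value_eq_imp_base_eq_and_shift_eq)

lemma S1j_antipode: "m > 0 \<Longrightarrow> S1j m (antipode m j) = S1j m j"
  unfolding S1j_eq_image exponent_value_antipode ..

lemma S1j_overlap_imp_eq_or_antipode: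
  assumes "m > 0" "j1 < 2*m" "j2 < 2*m" "S1j m j1 \<inter> S1j m j2 \<noteq> {}"
  shows "j1 = j2 \<or> j1 = antipode m j2"
proof -
  obtain i1 i2 where "i1 < 2*m" "i2 < 2*m"
    and "exponent_value m i1 j1 = exponent_value m i2 j2"
    using assms(4) unfolding S1j_eq_image[OF assms(1)]
    by (auto dest: minus_exponent_value_mod_eq_imp_eq[OF assms(1)])
  then show ?thesis
    using exponent_value_eq_imp_base_eq_and_shift_eq[OF assms(1)] assms(2,3) by fastforce
qed

lemma S1j_eq_iff:
  assumes "m > 0" "j1 < 2*m" "j2 < 2*m"
  shows "S1j m j1 = S1j m j2 \<longleftrightarrow> j1 = j2 \<or> j1 = antipode m j2"
proof
  assume "S1j m j1 = S1j m j2"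
  moreover have "S1j m j1 \<noteq> {}" using card_S1j[OF assms(1), of j1] assms(1) by auto
  ultimately show "j1 = j2 \<or> j1 = antipode m j2"
    using S1j_overlap_imp_eq_or_antipode[OF assms] by simp
qed (use S1j_antipode[OF assms(1)] in auto)

lemma S1_eq_UN_half: "m > 0 \<Longrightarrow> S1 m = (\<Union>j<m. S1j m j)"
proof -
  assume "m > 0"
  have "S1j m j \<subseteq> (\<Union>j<m. S1j m j)" if "j < 2*m" for j
  proof (cases "j < m")
    case False
    then have "j - m < m" "antipode m (j - m) = j" using that unfolding antipode_def by auto
    then show ?thesis using S1j_antipode[OF \<open>m > 0\<close>, of "j - m"] by auto
  qed auto
  moreover have "{0..2*m-1} = {..<2*m}" using \<open>m > 0\<close> by auto
  ultimately show ?thesis unfolding S1_def by fastforce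
qed

lemma card_S1: "m > 0 \<Longrightarrow> card (S1 m) = 2 * m^2"
proof -
  assume "m > 0"
  have "card (\<Union>j<m. S1j m j) = (\<Sum>j<m. card (S1j m j))"
  proof (rule card_UN_disjoint)
    show "\<forall>j\<in>{..<m}. finite (S1j m j)" unfolding S1j_eq_image[OF \<open>m > 0\<close>] by simp
    show "\<forall>j1\<in>{..<m}. \<forall>j2\<in>{..<m}. j1 \<noteq> j2 \<longrightarrow> S1j m j1 \<inter> S1j m j2 = {}"
    proof (intro ballI impI)
      fix j1 j2 assume "j1 \<in> {..<m}" "j2 \<in> {..<m}" "j1 \<noteq> j2"
      moreover from this have "j1 \<noteq> antipode m j2" unfolding antipode_def by simp
      ultimately show "S1j m j1 \<inter> S1j m j2 = {}"
        using S1j_overlap_imp_eq_or_antipode[OF \<open>m > 0\<close>, of j1 j2] by auto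
    qed
  qed simp
  then show ?thesis
    using S1_eq_UN_half card_S1j \<open>m > 0\<close> by (simp add: power2_eq_square)
qed

theorem lemma3p17:
  fixes m :: nat
  assumes "m \<ge> 2"
  shows "(\<forall>j\<in>{0..2*m-1}. card (S1j m j) = 2*m)
       \<and> (\<forall>j1\<in>{0..2*m-1}. \<forall>j2\<in>{0..2*m-1}. j1 \<noteq> j2 \<longrightarrow>
            ((S1j m j1 \<inter> S1j m j2 = {} \<or> S1j m j1 = S1j m j2)
             \<and> (S1j m j1 = S1j m j2 \<longleftrightarrow> j1 mod (2*m) = (j2 + m) mod (2*m))))
       \<and> card (S1 m) = 2*m^2"
proof -
  have "m > 0" using assms by simp
  have range: "{0..2*m-1} = {..<2*m}" using \<open>m > 0\<close> by auto
  have "S1j m j1 = S1j m j2 \<longleftrightarrow> j1 mod (2*m) = (j2 + m) mod (2*m)"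
    and "S1j m j1 \<inter> S1j m j2 = {} \<or> S1j m j1 = S1j m j2"
    if "j1 < 2*m" "j2 < 2*m" "j1 \<noteq> j2" for j1 j2
    using S1j_eq_iff[OF \<open>m > 0\<close> that(1,2)]
      S1j_overlap_imp_eq_or_antipode[OF \<open>m > 0\<close> that(1,2)] that
    unfolding antipode_def by auto
  then show ?thesis
    unfolding range using card_S1j card_S1 \<open>m > 0\<close> by simp
qed

end
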